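(* Consider the protocol with state set $Q=\{L_1,L_2,N\}$ and (symmetric, deterministic) rules $L_1L_2\to L_1N$, $L_2L_1\to NL_1$, $L_1N\to NL_2$, $NL_1\to L_2N$, $L_2N\to NL_1$, $NL_2\to L_1N$, $NN\to NN$, $L_1L_1\to L_2L_2$, $L_2L_2\to L_1L_1$. This protocol is Pavlovian (it is the protocol associated to the payoff matrix with rows (player) and columns (opponent) ordered $L_1,L_2,N$: row $L_1$: $(-3,0,-3)$; row $L_2$: $(-1,-3,-3)$; row $N$: $(-2,-3,0)$), and it solves the leader election problem for populations of size at least $3$: for every $n\ge 3$, every configuration $C_0$ of $n$ agents containing at least one agent in state $L_1$ or $L_2$, and every fair execution starting from $C_0$, there is a time after which every configuration contains exactly one agent in a state of $\{L_1,L_2\}$.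
   Context: A population protocol has a finite state set $Q$ and a transition relation $\delta\subseteq Q^4$; we write $q_1q_2\to q_1'q_2'$ for $(q_1,q_2,q_1',q_2')\in\delta$. A configuration of $n\ge2$ agents is a multiset of $n$ elements of $Q$. We write $C\to C'$ if $C'$ is obtained from $C$ by choosing two of its elements (two distinct agents) in states $q_1,q_2$ and replacing them by $q_1',q_2'$ for some $(q_1,q_2,q_1',q_2')\in\delta$. An execution from $C_0$ is an infinite sequence $C_0,C_1,\dots$ with $C_i\to C_{i+1}$ for all $i$. It is fair if for every configuration $C$ occurring infinitely often and every $C'$ with $C\to C'$, $C'$ also occurs infinitely often. A symmetric game on $Q$ is a real matrix $M=(M_{q,r})_{q,r\in Q}$ ($M_{q,r}$ = payoff of playing $q$ against $r$). For $q',y\in Q$, $BR_{\neq q'}(y)$ is the set of $x\in Q\setminus\{q'\}$ with $M_{z,y}\le M_{x,y}$ for all $z\in Q\setminus\{q'\}$. The transition relation associated to $M$ consists of exactly those $(q_1,q_2,q_1',q_2')$ with: $q_1'=q_1$ if $M_{q_1,q_2}\ge0$, $q_1'\in BR_{\neq q_1}(q_2)$ if $M_{q_1,q_2}<0$; $q_2'=q_2$ if $M_{q_2,q_1}\ge0$, $q_2'\in BR_{\neq q_2}(q_1)$ if $M_{q_2,q_1}<0$. A population protocol is Pavlovian if $\delta$ equals the transition relation associated to some real matrix indexed by $Q\times Q$. *)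

theory Defs
  imports Complex_Main "HOL-Library.Multiset"
begin

text \<open>Generic population protocols over a state type 'q (the state set Q is UNIV).
  A transition relation is a set of quadruples (q1,q2,q1',q2').\<close>

type_synonym 'q trans = "('q \<times> 'q \<times> 'q \<times> 'q) set"

definition step :: "'q trans \<Rightarrow> 'q multiset \<Rightarrow> 'q multiset \<Rightarrow> bool" where
  "step \<delta> C C' \<longleftrightarrow> (\<exists>q1 q2 q1' q2'. (q1, q2, q1', q2') \<in> \<delta> \<and>
       {#q1, q2#} \<subseteq># C \<and> C' = C - {#q1, q2#} + {#q1', q2'#})"

definition execution :: "'q trans \<Rightarrow> (nat \<Rightarrow> 'q multiset) \<Rightarrow> bool" where
  "execution \<delta> E \<longleftrightarrow> (\<forall>i. step \<delta> (E i) (E (Suc i)))"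

definition fair :: "'q trans \<Rightarrow> (nat \<Rightarrow> 'q multiset) \<Rightarrow> bool" where
  "fair \<delta> E \<longleftrightarrow> (\<forall>C. (\<exists>\<^sub>\<infinity> i. E i = C) \<longrightarrow>
       (\<forall>C'. step \<delta> C C' \<longrightarrow> (\<exists>\<^sub>\<infinity> i. E i = C')))"

text \<open>Symmetric games: M q r is the payoff of playing q against r.\<close>

definition BR_ne :: "('q \<Rightarrow> 'q \<Rightarrow> real) \<Rightarrow> 'q \<Rightarrow> 'q \<Rightarrow> 'q set" where
  "BR_ne M q' y = {x. x \<noteq> q' \<and> (\<forall>z. z \<noteq> q' \<longrightarrow> M z y \<le> M x y)}"

definition game_trans :: "('q \<Rightarrow> 'q \<Rightarrow> real) \<Rightarrow> 'q trans" where
  "game_trans M = {(q1, q2, q1', q2').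
      (if M q1 q2 \<ge> 0 then q1' = q1 else q1' \<in> BR_ne M q1 q2) \<and>
      (if M q2 q1 \<ge> 0 then q2' = q2 else q2' \<in> BR_ne M q2 q1)}"

definition pavlovian :: "'q trans \<Rightarrow> bool" where
  "pavlovian \<delta> \<longleftrightarrow> (\<exists>M. \<delta> = game_trans M)"

datatype st = L1 | L2 | N

definition delta5 :: "st trans" where
  "delta5 = {(L1, L2, L1, N), (L2, L1, N, L1), (L1, N, N, L2), (N, L1, L2, N),
             (L2, N, N, L1), (N, L2, L1, N), (N, N, N, N), (L1, L1, L2, L2),
             (L2, L2, L1, L1)}"

fun M5 :: "st \<Rightarrow> st \<Rightarrow> real" where
  "M5 L1 L1 = -3" | "M5 L1 L2 = 0" | "M5 L1 N = -3"
| "M5 L2 L1 = -1" | "M5 L2 L2 = -3" | "M5 L2 N = -3"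
| "M5 N L1 = -2" | "M5 N L2 = -3" | "M5 N N = 0"

definition leaders :: "st multiset \<Rightarrow> nat" where
  "leaders C = count C L1 + count C L2"

end

theory Submission
  imports Defs "HOL-Library.Infinite_Set"
begin

(* Leader election: the argument is a potential-function argument that works
   for any population protocol over a finite state type.  Steps preserve the
   population size, so an execution visits finitely many configurations and
   some configuration recurs infinitely often; by fairness every configuration
   reachable from a recurring one recurs as well.  Hence, if a non-increasing
   potential can always be strictly decreased (by some reachable configuration)
   while it exceeds a bound k, it eventually stays at most k
   (fair_potential_bound).  For delta5 the potential is the number of leaders:
   no step creates a leader or removes the last one, and whenever there are
   at least two leaders among at least three agents, at most two steps remove
   one (a pair L1 L2 is reduced directly, otherwise one step first creates
   such a pair). *)


lemma all_st: "(\<forall>z. P z) \<longleftrightarrow> P L1 \<and> P L2 \<and> P N"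
  by (metis st.exhaust)

lemma BR_ne_M5:
  "x \<in> BR_ne M5 q y \<longleftrightarrow> x \<noteq> q \<and> (\<forall>z\<in>{L1, L2, N}. z \<noteq> q \<longrightarrow> M5 z y \<le> M5 x y)"
  unfolding BR_ne_def by (simp add: all_st)

lemma delta5_game_trans: "delta5 = game_trans M5"
proof (rule set_eqI)
  fix x :: "st \<times> st \<times> st \<times> st"
  obtain a b c d where x: "x = (a, b, c, d)" by (cases x) auto
  show "x \<in> delta5 \<longleftrightarrow> x \<in> game_trans M5"
    unfolding x delta5_def game_trans_def BR_ne_M5
    by (cases a; cases b; cases c; cases d; simp)
qed


lemma step_size:
  assumes "step \<delta> C C'"
  shows "size C' = size C"
proof -
  obtain q1 q2 q1' q2' where
    sub: "{#q1, q2#} \<subseteq># C" and C': "C' = C - {#q1, q2#} + {#q1', q2'#}"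
    using assms unfolding step_def by blast
  have "size {#q1, q2#} \<le> size C" using size_mset_mono[OF sub] .
  then show ?thesis using sub C' by (simp add: size_Diff_submset)
qed

lemma execution_size:
  assumes "execution \<delta> E"
  shows "size (E i) = size (E 0)"
proof (induction i)
  case (Suc i)
  have "step \<delta> (E i) (E (Suc i))" using assms by (simp add: execution_def)
  then show ?case using Suc.IH by (simp add: step_size)
qed simp

lemma step_by_rule:
  assumes "(q1, q2, q1', q2') \<in> \<delta>" and "{#q1, q2#} \<subseteq># C"
  shows "step \<delta> C (C - {#q1, q2#} + {#q1', q2'#})"
  using assms unfolding step_def by blast

lemma pair_subseteq_mset:
  "{#a, b#} \<subseteq># C \<longleftrightarrow> (if a = b then 2 \<le> count C a else 1 \<le> count C a \<and> 1 \<le> count C b)"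
  unfolding subseteq_mset_def by (auto simp: Suc_le_eq)

text \<open>Over a finite state type, an execution stays among the finitely many
  configurations of its initial size, so one of them occurs infinitely often.\<close>

lemma execution_recurrent_configuration:
  fixes E :: "nat \<Rightarrow> 'q multiset"
  assumes "finite (UNIV :: 'q set)" and "execution \<delta> E"
  shows "\<exists>C. \<exists>\<^sub>\<infinity> i. E i = C"
proof -
  let ?S = "multisets_of_size (UNIV :: 'q set) (size (E 0))"
  have finite: "finite ?S" using assms(1) by (rule finite_multisets_of_size)
  have "E i \<in> ?S" for i
    using execution_size[OF assms(2), of i] by (simp add: multisets_of_size_def)
  then have "\<exists>\<^sub>\<infinity> i. \<exists>C\<in>?S. E i = C" by (auto simp: INFM_nat_le)
  then have "\<exists>C\<in>?S. \<exists>\<^sub>\<infinity> i. E i = C" by (rule iffD1[OF INFM_finite_Bex_distrib[OF finite]])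
  then show ?thesis by blast
qed

lemma fair_reachable_recurrent:
  assumes "fair \<delta> E" and "(step \<delta>)\<^sup>*\<^sup>* C C'" and "\<exists>\<^sub>\<infinity> i. E i = C"
  shows "\<exists>\<^sub>\<infinity> i. E i = C'"
  using assms(2,3)
  by (induction rule: rtranclp_induct) (use assms(1) in \<open>auto simp: fair_def\<close>)

lemma fair_potential_bound:
  fixes E :: "nat \<Rightarrow> 'q multiset" and f :: "'q multiset \<Rightarrow> nat"
  assumes fin: "finite (UNIV :: 'q set)"
    and exec: "execution \<delta> E" and fair: "fair \<delta> E"
    and nonincr: "\<And>C C'. step \<delta> C C' \<Longrightarrow> f C' \<le> f C"
    and inv: "\<And>i. P (E i)"
    and progress: "\<And>C. P C \<Longrightarrow> k < f C \<Longrightarrow> \<exists>C'. (step \<delta>)\<^sup>*\<^sup>* C C' \<and> f C' < f C"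
  shows "\<exists>T. \<forall>t\<ge>T. f (E t) \<le> k"
proof -
  have decreasing: "f (E t) \<le> f (E s)" if "s \<le> t" for s t
    using lift_Suc_antimono_le[of "\<lambda>i. f (E i)"] that nonincr exec
    unfolding execution_def by blast
  obtain T where min: "\<And>t. f (E T) \<le> f (E t)"
    using ex_has_least_nat[of "\<lambda>_. True" 0 "\<lambda>t. f (E t)"] by auto
  obtain C where C: "\<exists>\<^sub>\<infinity> i. E i = C"
    using execution_recurrent_configuration[OF fin exec] by blast
  have bound: "f (E T) \<le> k"
  proof (rule ccontr)
    assume above: "\<not> f (E T) \<le> k"
    obtain i where i: "T \<le> i" "E i = C" using C unfolding INFM_nat_le by blast
    have fC: "f C = f (E T)" using decreasing[OF i(1)] min[of i] i(2) by simp
    obtain C' where reach: "(step \<delta>)\<^sup>*\<^sup>* C C'" and smaller: "f C' < f C"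
      using progress[of C] inv[of i] i(2) above fC by auto
    obtain j where "E j = C'"
      using fair_reachable_recurrent[OF fair reach C] by (auto simp: INFM_nat_le)
    then show False using min[of j] smaller fC by simp
  qed
  show ?thesis
  proof (intro exI allI impI)
    show "f (E t) \<le> k" if "T \<le> t" for t using decreasing[OF that] bound by linarith
  qed
qed


lemma finite_st: "finite (UNIV :: st set)"
proof -
  have "(UNIV :: st set) = {L1, L2, N}" using st.exhaust by auto
  then show ?thesis by (metis finite.emptyI finite.insertI)
qed

lemma size_st: "size (C :: st multiset) = count C L1 + count C L2 + count C N"
proof (induction C)
  case empty then show ?case by simp
next
  case (add x C) then show ?case by (cases x) simp_all
qed

lemma delta5_leaders_nonincreasing: "step delta5 C C' \<Longrightarrow> leaders C' \<le> leaders C"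
  unfolding step_def delta5_def leaders_def
  by (auto simp: subseteq_mset_def split: if_splits)

lemma delta5_leader_persists: "step delta5 C C' \<Longrightarrow> 1 \<le> leaders C \<Longrightarrow> 1 \<le> leaders C'"
  unfolding step_def delta5_def leaders_def
  by (auto simp: subseteq_mset_def split: if_splits)

lemma delta5_mixed_pair_reduction:
  assumes "1 \<le> count C L1" and "1 \<le> count C L2"
  shows "\<exists>C'. step delta5 C C' \<and> leaders C' < leaders C"
proof (intro exI conjI)
  show "step delta5 C (C - {#L1, L2#} + {#L1, N#})"
    by (rule step_by_rule) (use assms in \<open>auto simp: delta5_def pair_subseteq_mset\<close>)
  show "leaders (C - {#L1, L2#} + {#L1, N#}) < leaders C"
    using assms by (simp add: leaders_def)
qed

lemma delta5_create_mixed_pair: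
  assumes two: "2 \<le> leaders C" and three: "3 \<le> size C"
    and unmixed: "count C L1 = 0 \<or> count C L2 = 0"
  shows "\<exists>C'. step delta5 C C' \<and> leaders C' = leaders C \<and> 1 \<le> count C' L1 \<and> 1 \<le> count C' L2"
proof -
  have size: "size C = count C L1 + count C L2 + count C N" by (rule size_st)
  consider (L1_N) "count C L2 = 0" "1 \<le> count C N"
    | (L1_L1) "count C L2 = 0" "count C N = 0"
    | (L2_N) "count C L1 = 0" "1 \<le> count C N"
    | (L2_L2) "count C L1 = 0" "count C N = 0"
    using unmixed by linarith
  then show ?thesis
  proof cases
    case L1_N
    then show ?thesis using two
      by (intro exI[of _ "C - {#L1, N#} + {#N, L2#}"] conjI step_by_rule)
        (auto simp: delta5_def pair_subseteq_mset leaders_def simp flip: count_greater_zero_iff)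
  next
    case L1_L1
    then show ?thesis using two three size
      by (intro exI[of _ "C - {#L1, L1#} + {#L2, L2#}"] conjI step_by_rule)
        (auto simp: delta5_def pair_subseteq_mset leaders_def simp flip: count_greater_zero_iff)
  next
    case L2_N
    then show ?thesis using two
      by (intro exI[of _ "C - {#L2, N#} + {#N, L1#}"] conjI step_by_rule)
        (auto simp: delta5_def pair_subseteq_mset leaders_def simp flip: count_greater_zero_iff)
  next
    case L2_L2
    then show ?thesis using two three size
      by (intro exI[of _ "C - {#L2, L2#} + {#L1, L1#}"] conjI step_by_rule)
        (auto simp: delta5_def pair_subseteq_mset leaders_def simp flip: count_greater_zero_iff)
  qed
qed

lemma delta5_leader_reduction:
  assumes "2 \<le> leaders C" and "3 \<le> size C"
  shows "\<exists>C'. (step delta5)\<^sup>*\<^sup>* C C' \<and> leaders C' < leaders C"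
proof (cases "1 \<le> count C L1 \<and> 1 \<le> count C L2")
  case True
  then show ?thesis using delta5_mixed_pair_reduction by blast
next
  case False
  then have "count C L1 = 0 \<or> count C L2 = 0" by linarith
  then obtain D where step1: "step delta5 C D" and same: "leaders D = leaders C"
    and mixed: "1 \<le> count D L1" "1 \<le> count D L2"
    using delta5_create_mixed_pair[OF assms] by blast
  obtain C' where step2: "step delta5 D C'" and fewer: "leaders C' < leaders D"
    using delta5_mixed_pair_reduction[OF mixed] by blast
  have "(step delta5)\<^sup>*\<^sup>* C C'"
    using step1 step2 by (rule converse_rtranclp_into_rtranclp[OF _ r_into_rtranclp])
  then show ?thesis using fewer same by auto
qed

lemma delta5_leader_election:
  assumes size: "3 \<le> size (E 0)" and leader: "1 \<le> leaders (E 0)"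
    and exec: "execution delta5 E" and fair: "fair delta5 E"
  shows "\<exists>T. \<forall>t\<ge>T. leaders (E t) = 1"
proof -
  have some_leader: "1 \<le> leaders (E i)" for i
  proof (induction i)
    case (Suc i)
    have "step delta5 (E i) (E (Suc i))" using exec by (simp add: execution_def)
    then show ?case using Suc.IH by (rule delta5_leader_persists)
  qed (rule leader)
  have "\<exists>T. \<forall>t\<ge>T. leaders (E t) \<le> 1"
  proof (rule fair_potential_bound[OF finite_st exec fair delta5_leaders_nonincreasing,
        where P = "\<lambda>C. 3 \<le> size C"])
    show "3 \<le> size (E i)" for i using execution_size[OF exec, of i] size by simp
    show "\<exists>C'. (step delta5)\<^sup>*\<^sup>* C C' \<and> leaders C' < leaders C"
      if "3 \<le> size C" and "1 < leaders C" for C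
      using delta5_leader_reduction that by simp
  qed
  then show ?thesis using some_leader le_antisym by blast
qed

theorem mainTheorem5:
  shows "delta5 = game_trans M5 \<and> pavlovian delta5 \<and>
    (\<forall>E. size (E 0) \<ge> 3 \<longrightarrow> leaders (E 0) \<ge> 1 \<longrightarrow>
         execution delta5 E \<longrightarrow> fair delta5 E \<longrightarrow>
         (\<exists>T. \<forall>t\<ge>T. leaders (E t) = 1))"
  using delta5_game_trans delta5_leader_election unfolding pavlovian_def by blast

end
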